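(* Let $d=1$, $X\in\mathbb{R}$ with law $\mathbb{P}_X$, and let the missingness indicator $M\in\{0,1\}$ ($M=0$: observed) satisfy $\mathbb{P}[M=0\mid X]=\mathbb{1}(X\in\mathcal{I})$ for a measurable set $\mathcal{I}\subset\mathbb{R}$ (truncation mechanism); let $\varepsilon=\mathbb{P}[M=1]=\mathbb{P}[X\notin\mathcal{I}]<1$. Assume $\mathbb{P}_X=P_{\theta^*}$ for some $\theta^*\in\Theta$, and let $\theta_\infty^{\mathrm{MMD}}\in\arg\min_{\theta\in\Theta}\mathbb{E}_{M\sim\mathbb{P}_M}\big[\mathbb{D}^2(P_\theta^{(M)},\mathbb{P}_{X\mid M}^{(M)})\big]=\arg\min_{\theta\in\Theta}\mathbb{D}^2(P_\theta,\mathbb{P}_{X\mid M=0})$. Then $$ \mathbb{D}\big(P_{\theta_\infty^{\mathrm{MMD}}},P_{\theta^*}\big)\le 4\varepsilon. $$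
   Context: In expectations over $M$ the empty pattern $M=1$ is excluded, which gives the second expression for $\theta_\infty^{\mathrm{MMD}}$; $\mathbb{P}_{X\mid M=0}$ is the conditional law of $X$ given $M=0$. $\{P_\theta:\theta\in\Theta\}$ is a model on $\mathbb{R}$. $k$ is a positive definite kernel on $\mathbb{R}$ bounded by $1$ and characteristic, with RKHS $\mathcal{H}$, mean embedding $\Phi(Q)=\mathbb{E}_{Y\sim Q}[k(Y,\cdot)]$, MMD $\mathbb{D}(Q_1,Q_2)=\|\Phi(Q_1)-\Phi(Q_2)\|_{\mathcal{H}}$. *)

theory Defs
  imports "HOL-Probability.Probability"
begin

text \<open>The squared MMD is written as the literal
unfolding of the squared RKHS norm of the difference of mean embeddings:
\<open>\<parallel>\<Phi>(P)-\<Phi>(Q)\<parallel>^2 = E k(Y,Y') - 2 E k(Y,Z) + E k(Z,Z')\<close>.\<close>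

definition pos_def_kernel :: "(real \<Rightarrow> real \<Rightarrow> real) \<Rightarrow> bool" where
  "pos_def_kernel k \<longleftrightarrow> (\<forall>x y. k x y = k y x) \<and>
     (\<forall>(n::nat) (c::nat \<Rightarrow> real) (x::nat \<Rightarrow> real).
        (\<Sum>i<n. \<Sum>j<n. c i * c j * k (x i) (x j)) \<ge> 0)"

definition mmd_sq :: "(real \<Rightarrow> real \<Rightarrow> real) \<Rightarrow> real measure \<Rightarrow> real measure \<Rightarrow> real" where
  "mmd_sq k P Q =
     (\<integral>y. (\<integral>y'. k y y' \<partial>P) \<partial>P) - 2 * (\<integral>y. (\<integral>z. k y z \<partial>Q) \<partial>P) + (\<integral>z. (\<integral>z'. k z z' \<partial>Q) \<partial>Q)"

definition mmd :: "(real \<Rightarrow> real \<Rightarrow> real) \<Rightarrow> real measure \<Rightarrow> real measure \<Rightarrow> real" where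
  "mmd k P Q = sqrt (mmd_sq k P Q)"

definition borel_prob :: "real measure \<Rightarrow> bool" where
  "borel_prob P \<longleftrightarrow> prob_space P \<and> sets P = sets borel"

definition characteristic_kernel :: "(real \<Rightarrow> real \<Rightarrow> real) \<Rightarrow> bool" where
  "characteristic_kernel k \<longleftrightarrow>
     (\<forall>P Q. borel_prob P \<and> borel_prob Q \<and> mmd k P Q = 0 \<longrightarrow> P = Q)"

end

theory Submission
  imports Defs
begin

(* Let Q be the law of X and Q0, Q1 its conditional laws given M = 0 and M = 1. Then
   Q = (1 - eps) Q0 + eps Q1, so Q - Q0 = eps (Q1 - Q0) and D(Q, Q0) = eps D(Q0, Q1) <= 2 eps,
   as |k| <= 1. Since theta* competes in the minimisation, D(P_theta_inf, Q0) <= D(Q, Q0) <= 2 eps,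
   and the triangle inequality gives D(P_theta_inf, Q) <= 4 eps. Nonnegativity and the triangle
   inequality of D follow from positive semidefiniteness of the Gram form
   (P, Q) |-> int int k dP dQ on finitely many probability measures. *)

lemma square_le_mult_if_quadratic_nonneg:
  fixes a b c :: real
  assumes nonneg: "\<And>t. 0 \<le> a + 2 * b * t + c * t\<^sup>2" and "0 \<le> a" "0 \<le> c"
  shows "b\<^sup>2 \<le> a * c"
proof (cases "c = 0")
  case True
  show ?thesis
  proof (cases "b = 0")
    case False
    have "0 \<le> a + 2 * b * (- (a + 1) / (2 * b))" using nonneg[of "- (a + 1) / (2 * b)"] True by simp
    also have "\<dots> = -1" using False by (simp add: field_simps)
    finally show ?thesis by simp
  qed (use assms in simp)
next
  case False
  then have c: "c > 0" using \<open>0 \<le> c\<close> by simp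
  have "0 \<le> a + 2 * b * (- b / c) + c * (- b / c)\<^sup>2" by (rule nonneg)
  also have "\<dots> = a - b\<^sup>2 / c" using c by (simp add: field_simps power2_eq_square)
  finally show ?thesis using c by (simp add: divide_le_eq mult.commute)
qed

definition quad_form :: "(nat \<Rightarrow> nat \<Rightarrow> real) \<Rightarrow> nat \<Rightarrow> (nat \<Rightarrow> real) \<Rightarrow> real" where
  "quad_form G n c = (\<Sum>i<n. \<Sum>j<n. c i * c j * G i j)"

lemma sqrt_quad_form_add_le:
  assumes psd: "\<And>c. 0 \<le> quad_form G n c"
  shows "sqrt (quad_form G n (\<lambda>i. u i + v i)) \<le> sqrt (quad_form G n u) + sqrt (quad_form G n v)"
proof -
  define b where "b = (\<Sum>i<n. \<Sum>j<n. (u i * v j + v i * u j) * G i j) / 2"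
  have expand: "quad_form G n (\<lambda>i. u i + t * v i)
      = quad_form G n u + 2 * b * t + quad_form G n v * t\<^sup>2" for t
  proof -
    have "quad_form G n (\<lambda>i. u i + t * v i) = (\<Sum>i<n. \<Sum>j<n. u i * u j * G i j
        + t * ((u i * v j + v i * u j) * G i j) + t\<^sup>2 * (v i * v j * G i j))"
      unfolding quad_form_def by (intro sum.cong refl) (simp add: algebra_simps power2_eq_square)
    also have "\<dots> = quad_form G n u + t * (2 * b) + t\<^sup>2 * quad_form G n v"
      unfolding quad_form_def b_def sum.distrib sum_distrib_left[symmetric] by simp
    finally show ?thesis by (simp add: ac_simps)
  qed
  have "b\<^sup>2 \<le> quad_form G n u * quad_form G n v"
    using psd expand by (intro square_le_mult_if_quadratic_nonneg) metis+
  then have "b \<le> sqrt (quad_form G n u) * sqrt (quad_form G n v)"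
    unfolding real_sqrt_mult[symmetric] by (rule real_le_rsqrt)
  then have "quad_form G n (\<lambda>i. u i + v i) \<le> (sqrt (quad_form G n u) + sqrt (quad_form G n v))\<^sup>2"
    using expand[of 1] psd[of u] psd[of v] by (simp add: power2_sum)
  then show ?thesis
    using psd[of u] psd[of v] by (intro real_le_lsqrt) simp_all
qed

lemma nonneg_if_nonneg_add_const_over_n:
  fixes a b :: real
  assumes "\<And>m::nat. 0 < m \<Longrightarrow> 0 \<le> a + b / real m"
  shows "0 \<le> a"
proof (rule LIMSEQ_le_const)
  show "(\<lambda>m. a + b / real m) \<longlonglongrightarrow> a"
    using tendsto_add[OF tendsto_const lim_const_over_n[of b]] by simp
  show "\<exists>N. \<forall>m\<ge>N. 0 \<le> a + b / real m"
    using assms by (intro exI[of _ 1]) auto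
qed

lemma sum_cartesian_lessThan_fst:
  fixes f :: "'a \<Rightarrow> real"
  shows "(\<Sum>s\<in>A \<times> {..<m}. f (fst s)) = real m * sum f A"
proof -
  have "(\<Sum>s\<in>A \<times> {..<m}. f (fst s)) = (\<Sum>i\<in>A. \<Sum>a<m. f i)"
    by (subst sum.cartesian_product) (simp add: split_def)
  also have "\<dots> = real m * sum f A" by (simp add: sum_distrib_left)
  finally show ?thesis .
qed

lemma pos_def_kernel_sum_nonneg:
  fixes x w :: "'a \<Rightarrow> real"
  assumes "pos_def_kernel k" and "finite S"
  shows "0 \<le> (\<Sum>s\<in>S. \<Sum>t\<in>S. w s * w t * k (x s) (x t))"
proof -
  obtain h where h: "bij_betw h {..<card S} S"
    using ex_bij_betw_nat_finite[OF \<open>finite S\<close>] atLeast0LessThan by auto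
  have "0 \<le> (\<Sum>i<card S. \<Sum>j<card S. w (h i) * w (h j) * k (x (h i)) (x (h j)))"
    using assms(1) unfolding pos_def_kernel_def by force
  also have "\<dots> = (\<Sum>s\<in>S. \<Sum>t\<in>S. w s * w t * k (x s) (x t))"
    using sum.reindex_bij_betw[OF h, of "\<lambda>s. \<Sum>t\<in>S. w s * w t * k (x s) (x t)"]
      sum.reindex_bij_betw[OF h, of "\<lambda>t. w (h _) * w t * k (x (h _)) (x t)"] by simp
  finally show ?thesis .
qed

lemma (in prob_space) abs_integral_le_1:
  fixes f :: "'a \<Rightarrow> real"
  assumes "f \<in> borel_measurable M" and "\<And>x. \<bar>f x\<bar> \<le> 1"
  shows "\<bar>\<integral>x. f x \<partial>M\<bar> \<le> 1"
proof -
  have "integrable M f"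
    using assms by (intro integrable_const_bound[where B=1]) auto
  then show ?thesis
    using assms(2) integral_le_const[of f 1] integral_ge_const[of f "-1"] by (auto simp: abs_le_iff)
qed

lemma distr_PiM_pair_components:
  fixes \<pi> :: "'i \<Rightarrow> 'a measure"
  assumes P: "\<And>i. i \<in> I \<Longrightarrow> prob_space (\<pi> i)" and ab: "a \<in> I" "b \<in> I" "a \<noteq> b"
  shows "distr (PiM I \<pi>) (\<pi> a \<Otimes>\<^sub>M \<pi> b) (\<lambda>x. (x a, x b)) = \<pi> a \<Otimes>\<^sub>M \<pi> b"
proof -
  interpret prob_space "PiM I \<pi>" using P by (intro prob_space_PiM) auto
  have rv: "\<And>i. i \<in> I \<Longrightarrow> random_variable (\<pi> i) (\<lambda>x. x i)" by measurable
  have "distr (PiM I \<pi>) (PiM I \<pi>) (\<lambda>x. \<lambda>i\<in>I. x i) = distr (PiM I \<pi>) (PiM I \<pi>) (\<lambda>x. x)"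
    by (rule distr_cong) (auto simp: space_PiM PiE_restrict)
  moreover have "PiM I (\<lambda>i. distr (PiM I \<pi>) (\<pi> i) (\<lambda>x. x i)) = PiM I \<pi>"
    by (rule PiM_cong) (auto intro!: distr_PiM_component P)
  ultimately have "indep_vars \<pi> (\<lambda>i x. x i) I"
    using ab by (subst indep_vars_iff_distr_eq_PiM'[OF _ rv]) auto
  then have "indep_var (PiM {a} \<pi>) (\<lambda>x. restrict x {a}) (PiM {b} \<pi>) (\<lambda>x. restrict x {b})"
    using ab by (intro indep_var_restrict) auto
  then have "indep_var (\<pi> a) ((\<lambda>f. f a) \<circ> (\<lambda>x. restrict x {a})) (\<pi> b) ((\<lambda>f. f b) \<circ> (\<lambda>x. restrict x {b}))"
    by (rule indep_var_compose) (auto intro: measurable_component_singleton)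
  then have "indep_var (\<pi> a) (\<lambda>x. x a) (\<pi> b) (\<lambda>x. x b)"
    by (simp add: o_def)
  then have "distr (PiM I \<pi>) (\<pi> a) (\<lambda>x. x a) \<Otimes>\<^sub>M distr (PiM I \<pi>) (\<pi> b) (\<lambda>x. x b)
      = distr (PiM I \<pi>) (\<pi> a \<Otimes>\<^sub>M \<pi> b) (\<lambda>x. (x a, x b))"
    using indep_var_distribution_eq by blast
  then show ?thesis
    using distr_PiM_component[of I \<pi>, OF P] ab by simp
qed

lemma borel_measurable_borel_prob:
  assumes "borel_prob P" and "f \<in> borel_measurable borel"
  shows "f \<in> borel_measurable P"
  using assms measurable_cong_sets[of P borel, OF _ refl] by (auto simp: borel_prob_def)

text \<open>The RKHS inner product \<open>\<langle>\<Phi>(P), \<Phi>(Q)\<rangle>\<close> of mean embeddings; no RKHS is constructed, the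
  positive semidefiniteness of this form is proved directly.\<close>

definition kernel_mean_inner :: "(real \<Rightarrow> real \<Rightarrow> real) \<Rightarrow> real measure \<Rightarrow> real measure \<Rightarrow> real" where
  "kernel_mean_inner k P Q = (\<integral>y. (\<integral>z. k y z \<partial>Q) \<partial>P)"

lemma mmd_sq_eq_kernel_mean_inner:
  "mmd_sq k P Q = kernel_mean_inner k P P - 2 * kernel_mean_inner k P Q + kernel_mean_inner k Q Q"
  unfolding mmd_sq_def kernel_mean_inner_def ..

locale bounded_kernel =
  fixes k :: "real \<Rightarrow> real \<Rightarrow> real"
  assumes borel_measurable_kernel: "case_prod k \<in> borel_measurable (borel \<Otimes>\<^sub>M borel)"
    and abs_kernel_le_1: "\<bar>k x y\<bar> \<le> 1"
begin

lemma borel_measurable_kernel_pair: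
  assumes "sets A = sets borel" and "sets B = sets borel"
  shows "case_prod k \<in> borel_measurable (A \<Otimes>\<^sub>M B)"
proof -
  have "sets (A \<Otimes>\<^sub>M B) = sets (borel \<Otimes>\<^sub>M borel)"
    using assms by (intro sets_pair_measure_cong)
  then show ?thesis
    using borel_measurable_kernel measurable_cong_sets[OF _ refl] by blast
qed

lemma borel_measurable_kernel_diagonal: "(\<lambda>y. k y y) \<in> borel_measurable borel"
  using measurable_comp[of "\<lambda>y. (y, y)" borel "borel \<Otimes>\<^sub>M borel", OF _ borel_measurable_kernel]
  by (simp add: o_def)

lemma borel_measurable_kernel_section: "k y \<in> borel_measurable borel"
  using measurable_comp[of "\<lambda>z. (y, z)" borel "borel \<Otimes>\<^sub>M borel", OF _ borel_measurable_kernel]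
  by (simp add: o_def)

lemma borel_measurable_kernel_mean:
  assumes "borel_prob Q"
  shows "(\<lambda>y. \<integral>z. k y z \<partial>Q) \<in> borel_measurable borel"
proof -
  interpret prob_space Q using assms by (simp add: borel_prob_def)
  show ?thesis
    using assms borel_measurable_kernel_pair[of borel Q]
    by (intro borel_measurable_lebesgue_integral) (simp_all add: borel_prob_def)
qed

lemma abs_kernel_mean_le_1:
  assumes "borel_prob Q"
  shows "\<bar>\<integral>z. k y z \<partial>Q\<bar> \<le> 1"
  using assms borel_measurable_borel_prob[OF assms borel_measurable_kernel_section] abs_kernel_le_1
  by (intro prob_space.abs_integral_le_1) (auto simp: borel_prob_def)

lemma abs_kernel_mean_inner_le_1:
  assumes "borel_prob P" and "borel_prob Q"
  shows "\<bar>kernel_mean_inner k P Q\<bar> \<le> 1"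
proof -
  interpret prob_space P using assms(1) by (simp add: borel_prob_def)
  show ?thesis
    unfolding kernel_mean_inner_def
    using borel_measurable_borel_prob[OF assms(1) borel_measurable_kernel_mean[OF assms(2)]]
      abs_kernel_mean_le_1[OF assms(2)]
    by (rule abs_integral_le_1)
qed

lemma integrable_kernel_mean:
  assumes "borel_prob P" and "borel_prob Q"
  shows "integrable P (\<lambda>y. \<integral>z. k y z \<partial>Q)"
proof -
  interpret prob_space P using assms(1) by (simp add: borel_prob_def)
  show ?thesis
    using borel_measurable_borel_prob[OF assms(1) borel_measurable_kernel_mean[OF assms(2)]]
      abs_kernel_mean_le_1[OF assms(2)]
    by (intro integrable_const_bound[where B=1]) auto
qed

lemma integral_PiM_kernel_components:
  fixes \<pi> :: "'i \<Rightarrow> real measure"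
  assumes P: "\<And>i. i \<in> I \<Longrightarrow> borel_prob (\<pi> i)" and ab: "a \<in> I" "b \<in> I"
  shows "(\<integral>x. k (x a) (x b) \<partial>PiM I \<pi>)
    = (if a = b then \<integral>y. k y y \<partial>\<pi> a else kernel_mean_inner k (\<pi> a) (\<pi> b))"
proof (cases "a = b")
  case True
  have "(\<lambda>y. k y y) \<in> borel_measurable (\<pi> a)"
    using P[OF ab(1)] borel_measurable_kernel_diagonal by (rule borel_measurable_borel_prob)
  then have "(\<integral>x. k (x a) (x a) \<partial>PiM I \<pi>) = (\<integral>y. k y y \<partial>distr (PiM I \<pi>) (\<pi> a) (\<lambda>x. x a))"
    using ab by (intro integral_distr[symmetric]) measurable
  then show ?thesis
    using True distr_PiM_component[of I \<pi> a] P ab by (simp add: borel_prob_def)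
next
  case False
  interpret A: prob_space "\<pi> a" using P ab by (simp add: borel_prob_def)
  interpret B: prob_space "\<pi> b" using P ab by (simp add: borel_prob_def)
  interpret AB: pair_sigma_finite "\<pi> a" "\<pi> b" by unfold_locales
  interpret ABp: prob_space "\<pi> a \<Otimes>\<^sub>M \<pi> b" by (rule prob_space_pair) unfold_locales
  have k_AB: "case_prod k \<in> borel_measurable (\<pi> a \<Otimes>\<^sub>M \<pi> b)"
    using P ab by (intro borel_measurable_kernel_pair) (simp_all add: borel_prob_def)
  have pair: "(\<lambda>x. (x a, x b)) \<in> measurable (PiM I \<pi>) (\<pi> a \<Otimes>\<^sub>M \<pi> b)"
    using ab by measurable
  have "(\<integral>x. k (x a) (x b) \<partial>PiM I \<pi>)
      = integral\<^sup>L (distr (PiM I \<pi>) (\<pi> a \<Otimes>\<^sub>M \<pi> b) (\<lambda>x. (x a, x b))) (case_prod k)"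
    using integral_distr[OF pair k_AB] by simp
  also have "\<dots> = integral\<^sup>L (\<pi> a \<Otimes>\<^sub>M \<pi> b) (case_prod k)"
    using distr_PiM_pair_components[of I \<pi> a b] P ab False by (simp add: borel_prob_def)
  also have "\<dots> = kernel_mean_inner k (\<pi> a) (\<pi> b)"
  proof -
    have "integrable (\<pi> a \<Otimes>\<^sub>M \<pi> b) (case_prod k)"
      using k_AB abs_kernel_le_1 by (intro ABp.integrable_const_bound[where B=1]) auto
    from AB.integral_fst'[OF this] show ?thesis
      unfolding kernel_mean_inner_def by simp
  qed
  finally show ?thesis using False by simp
qed

end

definition mixture_of :: "real measure \<Rightarrow> real \<Rightarrow> real measure \<Rightarrow> real measure \<Rightarrow> bool" where
  "mixture_of Q \<epsilon> Q0 Q1 \<longleftrightarrow> (\<forall>g B. g \<in> borel_measurable borel \<longrightarrow> (\<forall>y. \<bar>g y\<bar> \<le> B) \<longrightarrow>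
     (\<integral>y. g y \<partial>Q) = (1 - \<epsilon>) * (\<integral>y. g y \<partial>Q0) + \<epsilon> * (\<integral>y. g y \<partial>Q1))"

locale bounded_pd_kernel = bounded_kernel +
  assumes pos_def_kernel: "pos_def_kernel k"
begin

lemma kernel_commute: "k x y = k y x"
  using pos_def_kernel unfolding pos_def_kernel_def by blast

lemma kernel_mean_inner_commute:
  assumes "borel_prob P" and "borel_prob Q"
  shows "kernel_mean_inner k P Q = kernel_mean_inner k Q P"
proof -
  interpret P: prob_space P using assms(1) by (simp add: borel_prob_def)
  interpret Q: prob_space Q using assms(2) by (simp add: borel_prob_def)
  interpret PQ: pair_sigma_finite P Q by unfold_locales
  interpret PQp: prob_space "P \<Otimes>\<^sub>M Q" by (rule prob_space_pair) unfold_locales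
  have "integrable (P \<Otimes>\<^sub>M Q) (case_prod k)"
    using assms borel_measurable_kernel_pair[of P Q] abs_kernel_le_1
    by (intro PQp.integrable_const_bound[where B=1]) (auto simp: borel_prob_def)
  from PQ.Fubini_integral[OF this] show ?thesis
    unfolding kernel_mean_inner_def by (simp add: kernel_commute)
qed

text \<open>Positive definiteness passes from points to probability measures by sampling: for
  independent draws \<open>x\<^sub>s \<sim> \<pi>\<^sub>s\<close>, the expected Gram form \<open>\<Sum>\<^sub>s\<^sub>t w\<^sub>s w\<^sub>t k(x\<^sub>s, x\<^sub>t)\<close> is the
  Gram form of the measures up to a diagonal correction.\<close>

lemma kernel_sample_gram_expectation_nonneg:
  fixes \<pi> :: "'i \<Rightarrow> real measure" and w :: "'i \<Rightarrow> real"
  assumes "finite I" and P: "\<And>s. s \<in> I \<Longrightarrow> borel_prob (\<pi> s)"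
  shows "0 \<le> (\<Sum>s\<in>I. \<Sum>t\<in>I. w s * w t * kernel_mean_inner k (\<pi> s) (\<pi> t))
    + (\<Sum>s\<in>I. (w s)\<^sup>2 * ((\<integral>y. k y y \<partial>\<pi> s) - kernel_mean_inner k (\<pi> s) (\<pi> s)))"
proof -
  interpret prob_space "PiM I \<pi>"
    using P by (intro prob_space_PiM) (simp add: borel_prob_def)
  have integrable: "integrable (PiM I \<pi>) (\<lambda>x. k (x s) (x t))" if "s \<in> I" "t \<in> I" for s t
  proof -
    have "(\<lambda>x. (x s, x t)) \<in> measurable (PiM I \<pi>) (\<pi> s \<Otimes>\<^sub>M \<pi> t)"
      using that by measurable
    from measurable_comp[OF this borel_measurable_kernel_pair]
    have "(\<lambda>x. k (x s) (x t)) \<in> borel_measurable (PiM I \<pi>)"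
      using P that by (simp add: o_def borel_prob_def)
    then show ?thesis
      using abs_kernel_le_1 by (intro integrable_const_bound[where B=1]) auto
  qed
  have "0 \<le> (\<integral>x. (\<Sum>s\<in>I. \<Sum>t\<in>I. w s * w t * k (x s) (x t)) \<partial>PiM I \<pi>)"
    using pos_def_kernel_sum_nonneg[OF pos_def_kernel \<open>finite I\<close>]
    by (intro Bochner_Integration.integral_nonneg) auto
  also have "\<dots> = (\<Sum>s\<in>I. \<Sum>t\<in>I. w s * w t * (\<integral>x. k (x s) (x t) \<partial>PiM I \<pi>))"
    using integrable by (simp add: integral_sum integrable_sum)
  also have "\<dots> = (\<Sum>s\<in>I. \<Sum>t\<in>I. w s * w t * kernel_mean_inner k (\<pi> s) (\<pi> t)
      + (if s = t then (w s)\<^sup>2 * ((\<integral>y. k y y \<partial>\<pi> s) - kernel_mean_inner k (\<pi> s) (\<pi> s)) else 0))"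
    using integral_PiM_kernel_components[of I \<pi>, OF P]
    by (intro sum.cong refl) (auto simp: power2_eq_square algebra_simps)
  also have "\<dots> = (\<Sum>s\<in>I. \<Sum>t\<in>I. w s * w t * kernel_mean_inner k (\<pi> s) (\<pi> t))
    + (\<Sum>s\<in>I. (w s)\<^sup>2 * ((\<integral>y. k y y \<partial>\<pi> s) - kernel_mean_inner k (\<pi> s) (\<pi> s)))"
    using \<open>finite I\<close> by (simp add: sum.distrib)
  finally show ?thesis .
qed

text \<open>Sampling \<open>m\<close> copies of each \<open>P i\<close> with weight \<open>c i / m\<close> makes the diagonal correction
  \<open>O(1/m)\<close>.\<close>

lemma kernel_mean_inner_psd:
  assumes P: "\<And>i. i < n \<Longrightarrow> borel_prob (P i)"
  shows "0 \<le> quad_form (\<lambda>i j. kernel_mean_inner k (P i) (P j)) n c"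
proof (rule nonneg_if_nonneg_add_const_over_n)
  fix m :: nat
  assume "0 < m"
  let ?G = "\<lambda>i j. kernel_mean_inner k (P i) (P j)"
  define I where "I = {..<n} \<times> {..<m}"
  define D where "D i = (\<integral>y. k y y \<partial>P i) - ?G i i" for i
  have nonneg: "0 \<le> (\<Sum>s\<in>I. \<Sum>t\<in>I. c (fst s) / m * (c (fst t) / m) * ?G (fst s) (fst t))
      + (\<Sum>s\<in>I. (c (fst s) / m)\<^sup>2 * D (fst s))"
    unfolding D_def I_def using P by (intro kernel_sample_gram_expectation_nonneg) auto
  have inner: "(\<Sum>t\<in>I. c (fst s) / m * (c (fst t) / m) * ?G (fst s) (fst t))
      = c (fst s) / m * (\<Sum>j<n. c j * ?G (fst s) j)" for s
    unfolding I_def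
    using sum_cartesian_lessThan_fst[of "\<lambda>j. c (fst s) / m * (c j / m) * ?G (fst s) j" "{..<n}" m] \<open>0 < m\<close>
    by (simp add: sum_distrib_left mult.assoc)
  have gram: "(\<Sum>s\<in>I. \<Sum>t\<in>I. c (fst s) / m * (c (fst t) / m) * ?G (fst s) (fst t))
      = quad_form ?G n c"
    unfolding inner unfolding I_def
    using sum_cartesian_lessThan_fst[of "\<lambda>i. c i / m * (\<Sum>j<n. c j * ?G i j)" "{..<n}" m] \<open>0 < m\<close>
    by (simp add: quad_form_def sum_distrib_left mult.assoc)
  have diagonal: "(\<Sum>s\<in>I. (c (fst s) / m)\<^sup>2 * D (fst s)) = (\<Sum>i<n. (c i)\<^sup>2 * D i) / m"
    unfolding I_def
    using sum_cartesian_lessThan_fst[of "\<lambda>i. (c i / m)\<^sup>2 * D i" "{..<n}" m] \<open>0 < m\<close>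
    by (simp add: sum_divide_distrib[symmetric] power2_eq_square)
  show "0 \<le> quad_form ?G n c + (\<Sum>i<n. (c i)\<^sup>2 * D i) / m"
    using nonneg gram diagonal by simp
qed

lemma quad_form_kernel_mean_inner_3:
  assumes "borel_prob A" and "borel_prob B" and "borel_prob C"
  shows "quad_form (\<lambda>i j. kernel_mean_inner k ([A, B, C] ! i) ([A, B, C] ! j)) 3 u
    = (u 0)\<^sup>2 * kernel_mean_inner k A A + (u 1)\<^sup>2 * kernel_mean_inner k B B
      + (u 2)\<^sup>2 * kernel_mean_inner k C C + 2 * u 0 * u 1 * kernel_mean_inner k A B
      + 2 * u 0 * u 2 * kernel_mean_inner k A C + 2 * u 1 * u 2 * kernel_mean_inner k B C"
  using kernel_mean_inner_commute[OF assms(1,2)] kernel_mean_inner_commute[OF assms(1,3)]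
    kernel_mean_inner_commute[OF assms(2,3)]
  by (simp add: quad_form_def numeral_3_eq_3 numeral_2_eq_2 power2_eq_square algebra_simps)

lemma quad_form_kernel_mean_inner_3_nonneg:
  assumes "borel_prob A" and "borel_prob B" and "borel_prob C"
  shows "0 \<le> quad_form (\<lambda>i j. kernel_mean_inner k ([A, B, C] ! i) ([A, B, C] ! j)) 3 u"
  using assms by (intro kernel_mean_inner_psd) (auto simp: numeral_3_eq_3 less_Suc_eq)

lemma mmd_sq_nonneg:
  assumes "borel_prob A" and "borel_prob B"
  shows "0 \<le> mmd_sq k A B"
  using quad_form_kernel_mean_inner_3_nonneg[OF assms assms(2), of "(!) [1, -1, 0]"]
  unfolding quad_form_kernel_mean_inner_3[OF assms assms(2)]
  by (simp add: mmd_sq_eq_kernel_mean_inner)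

lemma mmd_nonneg:
  assumes "borel_prob A" and "borel_prob B"
  shows "0 \<le> mmd k A B"
  using mmd_sq_nonneg[OF assms] by (simp add: mmd_def)

lemma mmd_commute:
  assumes "borel_prob A" and "borel_prob B"
  shows "mmd k A B = mmd k B A"
  using kernel_mean_inner_commute[OF assms]
  by (simp add: mmd_def mmd_sq_eq_kernel_mean_inner)

lemma mmd_triangle:
  assumes "borel_prob A" and "borel_prob B" and "borel_prob C"
  shows "mmd k A C \<le> mmd k A B + mmd k B C"
proof -
  let ?q = "quad_form (\<lambda>i j. kernel_mean_inner k ([A, B, C] ! i) ([A, B, C] ! j)) 3"
  let ?u = "(!) [1, -1, 0]" and ?v = "(!) [0, 1, -1]"
  have "mmd_sq k A C = ?q (\<lambda>i. ?u i + ?v i)"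
    "mmd_sq k A B = ?q ?u" "mmd_sq k B C = ?q ?v"
    unfolding quad_form_kernel_mean_inner_3[OF assms]
    by (simp_all add: mmd_sq_eq_kernel_mean_inner)
  then show ?thesis
    unfolding mmd_def
    using sqrt_quad_form_add_le[OF quad_form_kernel_mean_inner_3_nonneg[OF assms]] by simp
qed

lemma mmd_le_2:
  assumes "borel_prob A" and "borel_prob B"
  shows "mmd k A B \<le> 2"
proof -
  have "mmd_sq k A B \<le> 2\<^sup>2"
    using abs_kernel_mean_inner_le_1[OF assms(1,1)] abs_kernel_mean_inner_le_1[OF assms]
      abs_kernel_mean_inner_le_1[OF assms(2,2)]
    by (simp add: mmd_sq_eq_kernel_mean_inner abs_le_iff)
  then show ?thesis
    unfolding mmd_def by (rule real_le_lsqrt[rotated]) simp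
qed

lemma kernel_mean_inner_mixture:
  assumes "borel_prob P" "borel_prob Q0" "borel_prob Q1" and "mixture_of Q \<epsilon> Q0 Q1"
  shows "kernel_mean_inner k P Q = (1 - \<epsilon>) * kernel_mean_inner k P Q0 + \<epsilon> * kernel_mean_inner k P Q1"
    and "kernel_mean_inner k Q P = (1 - \<epsilon>) * kernel_mean_inner k Q0 P + \<epsilon> * kernel_mean_inner k Q1 P"
proof -
  have mix: "(\<integral>y. g y \<partial>Q) = (1 - \<epsilon>) * (\<integral>y. g y \<partial>Q0) + \<epsilon> * (\<integral>y. g y \<partial>Q1)"
    if "g \<in> borel_measurable borel" "\<And>y. \<bar>g y\<bar> \<le> B" for g B
    using assms(4) that unfolding mixture_of_def by blast
  show "kernel_mean_inner k P Q = (1 - \<epsilon>) * kernel_mean_inner k P Q0 + \<epsilon> * kernel_mean_inner k P Q1"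
    unfolding kernel_mean_inner_def mix[OF borel_measurable_kernel_section abs_kernel_le_1]
    using integrable_kernel_mean[OF assms(1,2)] integrable_kernel_mean[OF assms(1,3)] by simp
  show "kernel_mean_inner k Q P = (1 - \<epsilon>) * kernel_mean_inner k Q0 P + \<epsilon> * kernel_mean_inner k Q1 P"
    unfolding kernel_mean_inner_def
    using mix[OF borel_measurable_kernel_mean abs_kernel_mean_le_1] assms(1) by simp
qed

text \<open>\<open>Q - Q0 = \<epsilon> (Q1 - Q0)\<close> as signed measures.\<close>

lemma mmd_sq_mixture:
  assumes "borel_prob Q0" "borel_prob Q1" "borel_prob Q" and "mixture_of Q \<epsilon> Q0 Q1"
  shows "mmd_sq k Q Q0 = \<epsilon>\<^sup>2 * mmd_sq k Q0 Q1"
  unfolding mmd_sq_eq_kernel_mean_inner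
    kernel_mean_inner_mixture(2)[OF assms(3) assms(1,2,4)]
    kernel_mean_inner_mixture(2)[OF assms(1) assms(1,2,4)]
    kernel_mean_inner_mixture(1)[OF assms(1) assms(1,2,4)]
    kernel_mean_inner_mixture(1)[OF assms(2) assms(1,2,4)]
    kernel_mean_inner_commute[OF assms(2,1)]
  by (simp add: power2_eq_square algebra_simps)

lemma mmd_le_of_mixture_minimizer:
  assumes R: "borel_prob R" and Q: "borel_prob Q" "borel_prob Q0" "borel_prob Q1"
    and mix: "mixture_of Q \<epsilon> Q0 Q1" "0 \<le> \<epsilon>"
    and min: "mmd k R Q0 \<le> mmd k Q Q0"
  shows "mmd k R Q \<le> 4 * \<epsilon>"
proof -
  have "mmd k Q Q0 = \<epsilon> * mmd k Q0 Q1"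
    unfolding mmd_def mmd_sq_mixture[OF Q(2,3,1) mix(1)] using mix(2) by (simp add: real_sqrt_mult)
  also have "\<dots> \<le> \<epsilon> * 2"
    using mmd_le_2[OF Q(2,3)] mix(2) by (rule mult_left_mono)
  finally have "mmd k Q Q0 \<le> 2 * \<epsilon>" by simp
  moreover have "mmd k R Q \<le> mmd k R Q0 + mmd k Q Q0"
    using mmd_triangle[OF R Q(2) Q(1)] mmd_commute[OF Q(2,1)] by simp
  ultimately show ?thesis using min by linarith
qed

end

lemma (in finite_measure) integral_indicator_eq_measure_mult_uniform:
  fixes f :: "'a \<Rightarrow> real"
  assumes A: "A \<in> sets M" "0 < measure M A" and f: "f \<in> borel_measurable M"
  shows "(\<integral>x. indicator A x * f x \<partial>M) = measure M A * (\<integral>x. f x \<partial>uniform_measure M A)"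
proof -
  have density: "(\<lambda>x. indicator A x / emeasure M A) = (\<lambda>x. ennreal (indicator A x / measure M A))"
  proof
    fix x
    have "ennreal 1 / ennreal (measure M A) = ennreal (1 / measure M A)"
      using A by (intro divide_ennreal) auto
    then show "indicator A x / emeasure M A = ennreal (indicator A x / measure M A)"
      by (cases "x \<in> A") (simp_all add: emeasure_eq_measure)
  qed
  have "(\<integral>x. f x \<partial>uniform_measure M A) = (\<integral>x. (indicator A x / measure M A) *\<^sub>R f x \<partial>M)"
    unfolding uniform_measure_def density using A f by (intro integral_density) auto
  also have "\<dots> = (\<integral>x. indicator A x * f x / measure M A \<partial>M)"
    by (intro Bochner_Integration.integral_cong) auto
  also have "\<dots> = (\<integral>x. indicator A x * f x \<partial>M) / measure M A"
    by (rule integral_divide_zero)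
  finally show ?thesis
    using A(2) by (simp add: field_simps)
qed

lemma (in prob_space) borel_prob_distr_uniform_measure:
  assumes X: "random_variable borel X" and S: "S \<in> events" "0 < prob S"
  shows "borel_prob (distr (uniform_measure M S) borel X)"
proof -
  have "prob_space (uniform_measure M S)"
    using S by (intro prob_space_uniform_measure) (auto simp: emeasure_eq_measure)
  moreover have "X \<in> measurable (uniform_measure M S) borel"
    using X measurable_cong_sets[OF sets_uniform_measure refl] by blast
  ultimately show ?thesis
    unfolding borel_prob_def by (auto intro: prob_space.prob_space_distr)
qed

text \<open>When the complement of \<open>S\<close> is null, any probability measure serves as the second
  component.\<close>

lemma (in prob_space) distr_mixture_of_uniform_measures:
  assumes X: "random_variable borel X" and S: "S \<in> events" "0 < prob S"
  shows "\<exists>Q1. borel_prob Q1 \<and>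
    mixture_of (distr M borel X) (prob (space M - S)) (distr (uniform_measure M S) borel X) Q1"
proof -
  define T where "T = space M - S"
  have T: "T \<in> events" using S unfolding T_def by auto
  define Q1 where "Q1 = (if 0 < prob T then distr (uniform_measure M T) borel X
    else distr (uniform_measure M S) borel X)"
  have "borel_prob Q1"
    unfolding Q1_def using X S T by (simp add: borel_prob_distr_uniform_measure)
  moreover have "mixture_of (distr M borel X) (prob T) (distr (uniform_measure M S) borel X) Q1"
    unfolding mixture_of_def
  proof (intro allI impI)
    fix g :: "real \<Rightarrow> real" and B :: real
    assume g: "g \<in> borel_measurable borel" "\<forall>y. \<bar>g y\<bar> \<le> B"
    have gX: "(\<lambda>x. g (X x)) \<in> borel_measurable M"
      using g X by measurable
    have integrable: "integrable M (\<lambda>x. indicator A x * g (X x))" if "A \<in> events" for A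
      using g that gX by (intro integrable_const_bound[where B=B]) (auto simp: indicator_def)
    have part: "(\<integral>x. indicator A x * g (X x) \<partial>M)
        = prob A * (\<integral>y. g y \<partial>distr (uniform_measure M A) borel X)" if "A \<in> events" "0 < prob A" for A
    proof -
      have "X \<in> measurable (uniform_measure M A) borel"
        using X measurable_cong_sets[OF sets_uniform_measure refl] by blast
      then show ?thesis
        using that gX g(1) by (simp add: integral_distr integral_indicator_eq_measure_mult_uniform)
    qed
    have T_part: "(\<integral>x. indicator T x * g (X x) \<partial>M) = prob T * (\<integral>y. g y \<partial>Q1)"
    proof (cases "0 < prob T")
      case True
      then show ?thesis using part[OF T] by (simp add: Q1_def)
    next
      case False
      then have "T \<in> null_sets M"
        using T measure_nonneg[of M T] by (auto simp: emeasure_eq_measure)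
      then have "AE x in M. indicator T x * g (X x) = 0"
        by (rule AE_mp[OF AE_not_in]) simp
      then have "(\<integral>x. indicator T x * g (X x) \<partial>M) = (\<integral>x. 0 \<partial>M)"
        using T gX by (intro integral_cong_AE) auto
      then show ?thesis
        using False measure_nonneg[of M T] by simp
    qed
    have "(\<integral>y. g y \<partial>distr M borel X) = (\<integral>x. indicator S x * g (X x) + indicator T x * g (X x) \<partial>M)"
      using X g(1) unfolding T_def
      by (subst integral_distr) (auto intro!: Bochner_Integration.integral_cong simp: indicator_def)
    also have "\<dots> = (\<integral>x. indicator S x * g (X x) \<partial>M) + (\<integral>x. indicator T x * g (X x) \<partial>M)"
      using S T by (intro Bochner_Integration.integral_add integrable) auto
    also have "\<dots> = (1 - prob T) * (\<integral>y. g y \<partial>distr (uniform_measure M S) borel X) + prob T * (\<integral>y. g y \<partial>Q1)"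
      using T_part part[OF S] prob_compl[OF S(1)] unfolding T_def by simp
    finally show "(\<integral>y. g y \<partial>distr M borel X)
        = (1 - prob T) * (\<integral>y. g y \<partial>distr (uniform_measure M S) borel X) + prob T * (\<integral>y. g y \<partial>Q1)" .
  qed
  ultimately show ?thesis
    unfolding T_def by blast
qed

theorem corollary1:
  fixes \<Omega> :: "'w measure" and X :: "'w \<Rightarrow> real" and M :: "'w \<Rightarrow> nat"
    and I :: "real set" and k :: "real \<Rightarrow> real \<Rightarrow> real"
    and P :: "'t \<Rightarrow> real measure" and \<Theta> :: "'t set"
    and \<theta>star \<theta>inf :: 't and \<epsilon> :: real
  assumes prob: "prob_space \<Omega>"
    and X_meas: "X \<in> borel_measurable \<Omega>"
    and M_meas: "M \<in> measurable \<Omega> (count_space UNIV)"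
    and M_vals: "\<forall>\<omega>\<in>space \<Omega>. M \<omega> \<in> {0, 1}"
    and I_meas: "I \<in> sets borel"
    and trunc: "AE \<omega> in \<Omega>. real_cond_exp \<Omega> (vimage_algebra (space \<Omega>) X borel)
                    (indicator {\<omega>\<in>space \<Omega>. M \<omega> = 0}) \<omega> = indicator I (X \<omega>)"
    and eps_def: "\<epsilon> = measure \<Omega> {\<omega>\<in>space \<Omega>. M \<omega> = 1}"
    and eps_lt: "\<epsilon> < 1"
    and k_meas: "case_prod k \<in> borel_measurable (borel \<Otimes>\<^sub>M borel)"
    and k_pd: "pos_def_kernel k"
    and k_bdd: "\<forall>x y. \<bar>k x y\<bar> \<le> 1"
    and k_char: "characteristic_kernel k"
    and model: "\<forall>\<theta>\<in>\<Theta>. borel_prob (P \<theta>)"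
    and star: "\<theta>star \<in> \<Theta>" "distr \<Omega> borel X = P \<theta>star"
    and argmin: "\<theta>inf \<in> \<Theta>"
      "\<forall>\<theta>\<in>\<Theta>. (mmd k (P \<theta>inf) (distr (uniform_measure \<Omega> {\<omega>\<in>space \<Omega>. M \<omega> = 0}) borel X))\<^sup>2
                  \<le> (mmd k (P \<theta>) (distr (uniform_measure \<Omega> {\<omega>\<in>space \<Omega>. M \<omega> = 0}) borel X))\<^sup>2"
  shows "mmd k (P \<theta>inf) (P \<theta>star) \<le> 4 * \<epsilon>"
proof -
  interpret prob_space \<Omega> by (rule prob)
  interpret bounded_pd_kernel k
    using k_meas k_bdd k_pd by unfold_locales auto
  define S0 where "S0 = {\<omega>\<in>space \<Omega>. M \<omega> = 0}"
  define Q0 where "Q0 = distr (uniform_measure \<Omega> S0) borel X"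
  have S0: "S0 \<in> events"
    unfolding S0_def using M_meas by measurable
  have eps: "\<epsilon> = prob (space \<Omega> - S0)"
    unfolding eps_def S0_def using M_vals by (intro arg_cong[where f=prob]) auto
  then have "0 < prob S0"
    using eps_lt prob_compl[OF S0] by simp
  then obtain Q1 where Q1: "borel_prob Q1" and mix: "mixture_of (P \<theta>star) \<epsilon> Q0 Q1"
    using distr_mixture_of_uniform_measures[OF X_meas S0] unfolding Q0_def eps star(2) by blast
  have Q0: "borel_prob Q0"
    unfolding Q0_def using X_meas S0 \<open>0 < prob S0\<close> by (rule borel_prob_distr_uniform_measure)
  have R: "borel_prob (P \<theta>inf)" and Q: "borel_prob (P \<theta>star)"
    using model argmin(1) star(1) by auto
  have "mmd k (P \<theta>inf) Q0 \<le> mmd k (P \<theta>star) Q0"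
    using argmin(2) star(1) mmd_nonneg[OF Q Q0] unfolding Q0_def S0_def by (auto intro: power2_le_imp_le)
  then show ?thesis
    using mmd_le_of_mixture_minimizer[OF R Q Q0 Q1 mix] eps by simp
qed

end
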